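(* Let $\alpha=(\alpha_n)_{n\in\mathbb{N}}\in\ell^2$ and let $f_\alpha(z)=\sum_{n\ge0}\alpha_n z^n$. The following statements are equivalent: (i) the Rhaly operator $R_\alpha$, $(R_\alpha f)(k)=\alpha_k\sum_{j=0}^k f(j)$, is bounded on $\ell^2$; (ii) $f_\alpha$ belongs to $\Lambda^2_{1/2}$; (iii) $\displaystyle\sup_{n\in\mathbb{N}} 2^n\sum_{j=2^n}^{2^{n+1}-1}|\alpha_j|^2<\infty$.
   Context: $\mathbb{N}=\{0,1,2,\dots\}$; $\ell^2$ is the Hilbert space of square-summable functions $f:\mathbb{N}\to\mathbb{C}$. For $\alpha\in\ell^2$, $f_\alpha\in H^2$ (the Hardy space of the unit disc) and is identified with its boundary function on the unit circle $\mathbb{T}$. The mean Lipschitz space is $\Lambda^2_{1/2}=\{f\in L^2(\mathbb{T}): \sup_{t\in[-\pi,\pi]}|t|^{-1/2}\|f_t-f\|_{L^2}<\infty\}$, where $f_t(e^{i\theta})=f(e^{i(\theta-t)})$. *)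

theory Defs
  imports "HOL-Analysis.Analysis"
begin

definition ell2 :: "(nat \<Rightarrow> complex) \<Rightarrow> bool" where
  "ell2 f \<longleftrightarrow> summable (\<lambda>n. (cmod (f n))^2)"

definition ell2_norm_sq :: "(nat \<Rightarrow> complex) \<Rightarrow> real" where
  "ell2_norm_sq f = (\<Sum>n. (cmod (f n))^2)"

definition rhaly :: "(nat \<Rightarrow> complex) \<Rightarrow> (nat \<Rightarrow> complex) \<Rightarrow> nat \<Rightarrow> complex" where
  "rhaly \<alpha> f k = \<alpha> k * (\<Sum>j\<le>k. f j)"

definition rhaly_bounded :: "(nat \<Rightarrow> complex) \<Rightarrow> bool" where
  "rhaly_bounded \<alpha> \<longleftrightarrow> (\<exists>C. \<forall>f. ell2 f \<longrightarrow>
      ell2 (rhaly \<alpha> f) \<and> ell2_norm_sq (rhaly \<alpha> f) \<le> C * ell2_norm_sq f)"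

text \<open>Functions on the unit circle T are represented as 2pi-periodic functions
  g on the reals (g(theta) standing for the value at e^{i theta}).\<close>
definition L2_circle :: "(real \<Rightarrow> complex) \<Rightarrow> bool" where
  "L2_circle g \<longleftrightarrow> g \<in> borel_measurable borel \<and> (\<forall>\<theta>. g (\<theta> + 2 * pi) = g \<theta>) \<and>
     set_integrable lborel {-pi..pi} (\<lambda>\<theta>. (cmod (g \<theta>))^2)"

definition L2_dist_circle :: "(real \<Rightarrow> complex) \<Rightarrow> (real \<Rightarrow> complex) \<Rightarrow> real" where
  "L2_dist_circle g h =
     sqrt ((1 / (2 * pi)) * (LINT \<theta>:{-pi..pi}|lborel. (cmod (g \<theta> - h \<theta>))^2))"

text \<open>g is (a representative of) the boundary function of f_alpha in H^2:
  the Taylor partial sums sum_{n<N} alpha_n e^{in theta} converge to g in L^2(T).\<close>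
definition boundary_function :: "(nat \<Rightarrow> complex) \<Rightarrow> (real \<Rightarrow> complex) \<Rightarrow> bool" where
  "boundary_function \<alpha> g \<longleftrightarrow> L2_circle g \<and>
     (\<lambda>N. L2_dist_circle (\<lambda>\<theta>. \<Sum>n<N. \<alpha> n * exp (\<i> * of_nat n * of_real \<theta>)) g)
       \<longlonglongrightarrow> 0"

definition mean_lipschitz_half :: "(real \<Rightarrow> complex) \<Rightarrow> bool" where
  "mean_lipschitz_half g \<longleftrightarrow> L2_circle g \<and>
     (\<exists>C. \<forall>t\<in>{-pi..pi}. L2_dist_circle (\<lambda>\<theta>. g (\<theta> - t)) g \<le> C * sqrt \<bar>t\<bar>)"

end

theory Submission
  imports Defs
begin

text \<open>
  (i) iff (iii): boundedness of R_alpha is the weighted Hardy inequality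
  sum_k |alpha_k|^2 |f_0 + ... + f_k|^2 <= C ||f||^2. Testing it on the indicator of [0, 2^n)
  gives (iii). Conversely, under (iii) the prefix sums on the m-th dyadic block are bounded by
  Cauchy-Schwarz with geometric weights, and the resulting geometric convolution sums to
  O(||f||^2).

  (ii) iff (iii): by Parseval, the partial sums P_N of f_alpha satisfy
  ||P_N(. - t) - P_N||^2 = sum_{n<N} |alpha_n|^2 (2 - 2 cos (n t)), and translation invariance of
  the L^2 distance gives | ||g_t - g|| - ||P_N(. - t) - P_N|| | <= 2 ||g - P_N||. For
  t = pi / 2^(n+1) the cosine is non-positive on the n-th block, which turns (ii) into (iii).
  Conversely, under (iii) the m-th block contributes at most min (2^m t^2, 2^-m) to the sum
  above, so the sum is O(|t|). The boundary function itself is the almost everywhere limit of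
  the dyadic partial sums P_(2^m), whose successive differences decay geometrically in L^2;
  Fatou's lemma then shows that P_N converges to it in L^2.
\<close>

section \<open>Dyadic blocks and a discrete Hardy inequality\<close>

definition block_sum :: "(nat \<Rightarrow> 'a::comm_monoid_add) \<Rightarrow> nat \<Rightarrow> 'a" where
  "block_sum h m = (\<Sum>k\<in>{2^m..<2^(m+1)}. h k)"

lemma block_sum_nonneg: "(\<And>k. 0 \<le> h k) \<Longrightarrow> 0 \<le> block_sum h m"
  for h :: "nat \<Rightarrow> real"
  unfolding block_sum_def by (intro sum_nonneg) auto

lemma sum_lessThan_power2_eq_block_sums:
  "(\<Sum>k<2^M. h k) = h 0 + (\<Sum>m<M. block_sum h m)"
proof (induction M)
  case 0
  then show ?case by simp
next
  case (Suc M)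
  have "(\<Sum>k<2^Suc M. h k) = (\<Sum>k\<in>{0..<2^M}. h k) + block_sum h M"
    unfolding block_sum_def
    by (subst sum.atLeastLessThan_concat) (auto simp: atLeast0LessThan)
  with Suc show ?case by (simp add: atLeast0LessThan add.assoc)
qed

lemma block_sum_bound_nonneg:
  fixes h :: "nat \<Rightarrow> real" and B :: real
  assumes "\<And>k. 0 \<le> h k" and "\<And>m. 2^m * block_sum h m \<le> B"
  shows "0 \<le> B" and "block_sum h m \<le> B / 2^m"
proof -
  show "0 \<le> B" using assms(2)[of 0] block_sum_nonneg[of h 0] assms(1) by simp
  show "block_sum h m \<le> B / 2^m" using assms(2)[of m] by (simp add: field_simps)
qed

lemma sum_power_atLeastLessThan_le:
  fixes q :: real
  assumes "0 \<le> q" "q < 1"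
  shows "(\<Sum>m\<in>{i..<M}. q^m) \<le> q^i / (1 - q)"
proof (cases "i < M")
  case True
  have "(1 - q) * (\<Sum>m\<in>{i..M-1}. q^m) = q^i - q^Suc (M-1)"
    using True by (intro sum_gp_multiplied) simp
  moreover have "{i..<M} = {i..M-1}" using True by auto
  ultimately have "(1 - q) * (\<Sum>m\<in>{i..<M}. q^m) \<le> q^i"
    using assms by simp
  then show ?thesis using assms by (simp add: field_simps)
next
  case False
  then show ?thesis using assms by simp
qed

lemma square_sum_le_card_mult_sum_squares:
  fixes x :: "'a \<Rightarrow> real"
  shows "(\<Sum>j\<in>A. x j)^2 \<le> card A * (\<Sum>j\<in>A. (x j)^2)"
  using Cauchy_Schwarz_ineq_sum[of "\<lambda>_. 1" x A] by simp

lemma square_sum_atMost_le_geometric_weighted: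
  fixes S :: "nat \<Rightarrow> real"
  assumes q: "1 < q"
  shows "(\<Sum>i\<le>m. S i)^2 \<le> q / (q - 1) * q^m * (\<Sum>i\<le>m. (S i)^2 / q^i)"
proof -
  have "(\<Sum>i\<le>m. S i)^2 = (\<Sum>i\<le>m. sqrt (q^i) * (S i / sqrt (q^i)))^2"
    using q by simp
  also have "\<dots> \<le> (\<Sum>i\<le>m. (sqrt (q^i))^2) * (\<Sum>i\<le>m. (S i / sqrt (q^i))^2)"
    by (rule Cauchy_Schwarz_ineq_sum)
  also have "\<dots> = (q^Suc m - 1) / (q - 1) * (\<Sum>i\<le>m. (S i)^2 / q^i)"
    using q by (simp add: lessThan_Suc_atMost[symmetric] geometric_sum power_divide del: sum.lessThan_Suc)
  also have "\<dots> \<le> q / (q - 1) * q^m * (\<Sum>i\<le>m. (S i)^2 / q^i)"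
  proof (rule mult_right_mono)
    show "(q^Suc m - 1) / (q - 1) \<le> q / (q - 1) * q^m"
      using q by (simp add: divide_right_mono)
  qed (use q in \<open>auto intro: sum_nonneg\<close>)
  finally show ?thesis .
qed

lemma sum_geometric_convolution_le:
  fixes q :: real
  assumes q: "0 < q" "q < 1" and E: "\<And>i. 0 \<le> E i"
  shows "(\<Sum>m<M. \<Sum>i\<le>m. q^(m-i) * E i) \<le> (\<Sum>i<M. E i) / (1 - q)"
proof -
  have "(\<Sum>m<M. \<Sum>i\<le>m. q^(m-i) * E i)
      = (\<Sum>m\<in>{..<M}. \<Sum>i\<in>{i\<in>{..<M}. i \<le> m}. q^m * (E i / q^i))"
    using q by (intro sum.cong) (auto simp: power_diff)
  also have "\<dots> = (\<Sum>i<M. \<Sum>m | m \<in> {..<M} \<and> i \<le> m. q^m * (E i / q^i))"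
    by (rule sum.swap_restrict) auto
  also have "\<dots> = (\<Sum>i<M. E i / q^i * (\<Sum>m\<in>{i..<M}. q^m))"
  proof (intro sum.cong refl)
    fix i
    have "{m. m \<in> {..<M} \<and> i \<le> m} = {i..<M}" by auto
    then show "(\<Sum>m | m \<in> {..<M} \<and> i \<le> m. q^m * (E i / q^i)) = E i / q^i * (\<Sum>m\<in>{i..<M}. q^m)"
      by (simp add: sum_distrib_left sum_divide_distrib mult.commute)
  qed
  also have "\<dots> \<le> (\<Sum>i<M. E i / q^i * (q^i / (1 - q)))"
    using q E by (intro sum_mono mult_left_mono sum_power_atLeastLessThan_le) auto
  also have "\<dots> = (\<Sum>i<M. E i) / (1 - q)"
    using q by (simp add: sum_divide_distrib)
  finally show ?thesis .
qed

text \<open>The weight 25/16 lies strictly between 1 and 2: the first makes the weighted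
  Cauchy-Schwarz bound geometric, the second absorbs the block lengths 2^i.\<close>

lemma square_sum_block_sums_le:
  fixes x :: "nat \<Rightarrow> real"
  shows "(\<Sum>i\<le>m. block_sum x i)^2 \<le> 25/9 * 2^m * (\<Sum>i\<le>m. (25/32)^(m-i) * block_sum (\<lambda>j. (x j)^2) i)"
proof -
  define E where "E = block_sum (\<lambda>j. (x j)^2)"
  have block_sq: "(block_sum x i)^2 \<le> 2^i * E i" for i
    using square_sum_le_card_mult_sum_squares[of x "{2^i..<2^(i+1)}"]
    by (simp add: E_def block_sum_def)
  have weights: "(25/16::real)^m * (\<Sum>i\<le>m. 2^i * E i / (25/16)^i) = 2^m * (\<Sum>i\<le>m. (25/32)^(m-i) * E i)"
    unfolding sum_distrib_left
  proof (intro sum.cong refl)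
    fix i assume "i \<in> {..m}"
    then obtain k where m: "m = i + k" by (auto simp: le_iff_add)
    have "(25/16::real)^k = 2^k * (25/32)^k"
      by (simp add: power_mult_distrib[symmetric])
    then show "(25/16)^m * (2^i * E i / (25/16)^i) = 2^m * ((25/32)^(m-i) * E i)"
      by (simp add: m power_add)
  qed
  have "(\<Sum>i\<le>m. block_sum x i)^2 \<le> 25/9 * (25/16)^m * (\<Sum>i\<le>m. (block_sum x i)^2 / (25/16)^i)"
    using square_sum_atMost_le_geometric_weighted[of "25/16" "block_sum x" m] by (simp add: divide_simps)
  also have "\<dots> \<le> 25/9 * (25/16)^m * (\<Sum>i\<le>m. 2^i * E i / (25/16)^i)"
    using block_sq by (intro mult_left_mono sum_mono divide_right_mono) auto
  also have "\<dots> = 25/9 * 2^m * (\<Sum>i\<le>m. (25/32)^(m-i) * E i)"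
    by (simp only: mult.assoc weights)
  finally show ?thesis unfolding E_def .
qed

lemma block_sum_Hardy_le:
  fixes a x :: "nat \<Rightarrow> real"
  assumes a: "\<And>k. 0 \<le> a k" and x: "\<And>k. 0 \<le> x k"
    and B: "0 \<le> B" "block_sum a m \<le> B / 2^m"
  shows "block_sum (\<lambda>k. a k * (\<Sum>j\<le>k. x j)^2) m
    \<le> 2 * B * (x 0)^2 / 2^m + 50/9 * B * (\<Sum>i\<le>m. (25/32)^(m-i) * block_sum (\<lambda>j. (x j)^2) i)"
proof -
  define P where "P = x 0 + (\<Sum>i\<le>m. block_sum x i)"
  have prefix_le: "(\<Sum>j\<le>k. x j) \<le> P" if "k \<in> {2^m..<2^(m+1)}" for k
  proof -
    have "(\<Sum>j\<le>k. x j) \<le> (\<Sum>j<2^(m+1). x j)"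
      using that by (intro sum_mono2) (auto intro: x)
    also have "\<dots> = P"
      unfolding sum_lessThan_power2_eq_block_sums P_def
      by (simp only: Suc_eq_plus1[symmetric] lessThan_Suc_atMost)
    finally show ?thesis .
  qed
  have "block_sum (\<lambda>k. a k * (\<Sum>j\<le>k. x j)^2) m \<le> block_sum (\<lambda>k. a k * P^2) m"
    unfolding block_sum_def
    using a x prefix_le by (intro sum_mono mult_left_mono power_mono sum_nonneg) auto
  also have "\<dots> = block_sum a m * P^2" by (simp add: block_sum_def sum_distrib_right)
  also have "\<dots> \<le> B / 2^m * (2 * (x 0)^2 + 2 * (\<Sum>i\<le>m. block_sum x i)^2)"
  proof (rule mult_mono)
    have "0 \<le> (x 0 - (\<Sum>i\<le>m. block_sum x i))^2" by simp
    then show "P^2 \<le> 2 * (x 0)^2 + 2 * (\<Sum>i\<le>m. block_sum x i)^2"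
      unfolding P_def by (simp add: power2_eq_square algebra_simps)
  qed (use B in auto)
  also have "\<dots> \<le> B / 2^m * (2 * (x 0)^2
      + 2 * (25/9 * 2^m * (\<Sum>i\<le>m. (25/32)^(m-i) * block_sum (\<lambda>j. (x j)^2) i)))"
    using square_sum_block_sums_le[of x m] B by (intro mult_left_mono add_left_mono) auto
  finally show ?thesis
    using B by (simp add: algebra_simps)
qed

lemma dyadic_Hardy_inequality:
  fixes a x :: "nat \<Rightarrow> real"
  assumes a: "\<And>k. 0 \<le> a k" and x: "\<And>k. 0 \<le> x k"
    and B: "\<And>m. 2^m * block_sum a m \<le> B"
  shows "(\<Sum>k<2^M. a k * (\<Sum>j\<le>k. x j)^2) \<le> (a 0 + 30 * B) * (\<Sum>j<2^M. (x j)^2)"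
proof -
  define E where "E = block_sum (\<lambda>j. (x j)^2)"
  have B0: "0 \<le> B" and a_block: "\<And>m. block_sum a m \<le> B / 2^m"
    using block_sum_bound_nonneg[OF a B] by auto
  have E0: "0 \<le> E i" for i unfolding E_def by (rule block_sum_nonneg) simp
  have half_sum: "(\<Sum>m<M. 1 / 2^m) \<le> (2::real)"
    using sum_power_atLeastLessThan_le[of "1/2" 0 M] by (simp add: atLeast0LessThan power_one_over)
  have conv: "(\<Sum>m<M. \<Sum>i\<le>m. (25/32)^(m-i) * E i) \<le> 32/7 * (\<Sum>i<M. E i)"
    using sum_geometric_convolution_le[of "25/32" E M] E0 by simp
  have "(\<Sum>k<2^M. a k * (\<Sum>j\<le>k. x j)^2)
      = a 0 * (x 0)^2 + (\<Sum>m<M. block_sum (\<lambda>k. a k * (\<Sum>j\<le>k. x j)^2) m)"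
    by (simp add: sum_lessThan_power2_eq_block_sums)
  also have "\<dots> \<le> a 0 * (x 0)^2
      + (\<Sum>m<M. 2 * B * (x 0)^2 / 2^m + 50/9 * B * (\<Sum>i\<le>m. (25/32)^(m-i) * E i))"
    unfolding E_def using a x B0 a_block by (intro add_left_mono sum_mono block_sum_Hardy_le)
  also have "\<dots> = a 0 * (x 0)^2 + 2 * B * (x 0)^2 * (\<Sum>m<M. 1 / 2^m)
      + 50/9 * B * (\<Sum>m<M. \<Sum>i\<le>m. (25/32)^(m-i) * E i)"
    by (simp add: sum.distrib sum_distrib_left)
  also have "\<dots> \<le> a 0 * (x 0)^2 + 2 * B * (x 0)^2 * 2 + 50/9 * B * (32/7 * (\<Sum>i<M. E i))"
    using half_sum conv B0 a[of 0] by (intro add_mono mult_left_mono) auto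
  also have "\<dots> \<le> (a 0 + 30 * B) * ((x 0)^2 + (\<Sum>i<M. E i))"
  proof -
    have "0 \<le> (\<Sum>i<M. E i)" using E0 by (simp add: sum_nonneg)
    then have "0 \<le> a 0 * (\<Sum>i<M. E i)" "0 \<le> B * (x 0)^2" "0 \<le> B * (\<Sum>i<M. E i)"
      using a[of 0] B0 by auto
    then show ?thesis by (simp add: ring_distribs)
  qed
  also have "(x 0)^2 + (\<Sum>i<M. E i) = (\<Sum>j<2^M. (x j)^2)"
    by (simp add: sum_lessThan_power2_eq_block_sums E_def)
  finally show ?thesis .
qed

lemma rhaly_bounded_if_block_bound:
  fixes \<alpha> :: "nat \<Rightarrow> complex"
  assumes B: "\<And>n. 2^n * block_sum (\<lambda>j. (cmod (\<alpha> j))^2) n \<le> B"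
  shows "rhaly_bounded \<alpha>"
proof -
  define K where "K = (cmod (\<alpha> 0))^2 + 30 * B"
  have "0 \<le> B" using block_sum_bound_nonneg[OF _ B] by simp
  then have K0: "0 \<le> K" by (simp add: K_def)
  have "ell2 (rhaly \<alpha> f) \<and> ell2_norm_sq (rhaly \<alpha> f) \<le> K * ell2_norm_sq f" if f: "ell2 f" for f
  proof -
    have partial_le: "(\<Sum>k<N. (cmod (rhaly \<alpha> f k))^2) \<le> K * ell2_norm_sq f" for N
    proof -
      have "(\<Sum>k<N. (cmod (rhaly \<alpha> f k))^2) \<le> (\<Sum>k<2^N. (cmod (rhaly \<alpha> f k))^2)"
        using less_exp[of N] by (intro sum_mono2) auto
      also have "\<dots> \<le> (\<Sum>k<2^N. (cmod (\<alpha> k))^2 * (\<Sum>j\<le>k. cmod (f j))^2)"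
      proof (rule sum_mono)
        fix k
        have "cmod (\<Sum>j\<le>k. f j) \<le> (\<Sum>j\<le>k. cmod (f j))" by (rule norm_sum)
        then show "(cmod (rhaly \<alpha> f k))^2 \<le> (cmod (\<alpha> k))^2 * (\<Sum>j\<le>k. cmod (f j))^2"
          by (simp add: rhaly_def norm_mult power_mult_distrib mult_left_mono power_mono)
      qed
      also have "\<dots> \<le> K * (\<Sum>j<2^N. (cmod (f j))^2)"
        unfolding K_def by (intro dyadic_Hardy_inequality B) auto
      also have "\<dots> \<le> K * ell2_norm_sq f"
        using f K0 unfolding ell2_def ell2_norm_sq_def
        by (intro mult_left_mono sum_le_suminf) auto
      finally show ?thesis .
    qed
    have "summable (\<lambda>k. (cmod (rhaly \<alpha> f k))^2)"
      by (rule summableI_nonneg_bounded[OF _ partial_le]) simp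
    moreover from this have "(\<Sum>k. (cmod (rhaly \<alpha> f k))^2) \<le> K * ell2_norm_sq f"
      by (rule suminf_le_const) (rule partial_le)
    ultimately show ?thesis
      unfolding ell2_def ell2_norm_sq_def by simp
  qed
  then show ?thesis unfolding rhaly_bounded_def by blast
qed

lemma block_bound_if_rhaly_bounded:
  fixes \<alpha> :: "nat \<Rightarrow> complex"
  assumes "rhaly_bounded \<alpha>"
  obtains B where "\<And>n. 2^n * block_sum (\<lambda>j. (cmod (\<alpha> j))^2) n \<le> B"
proof -
  obtain C where C: "\<And>f. ell2 f \<Longrightarrow> ell2 (rhaly \<alpha> f) \<and> ell2_norm_sq (rhaly \<alpha> f) \<le> C * ell2_norm_sq f"
    using assms unfolding rhaly_bounded_def by blast
  have "2^n * block_sum (\<lambda>j. (cmod (\<alpha> j))^2) n \<le> C" for n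
  proof -
    define f :: "nat \<Rightarrow> complex" where "f j = (if j < 2^n then 1 else 0)" for j
    have f_sq_zero: "(cmod (f j))^2 = 0" if "j \<notin> {..<2^n}" for j
      using that by (simp add: f_def)
    have "ell2 f" unfolding ell2_def by (rule summable_finite[of "{..<2^n}"]) (use f_sq_zero in auto)
    have norm_f: "ell2_norm_sq f = 2^n"
      unfolding ell2_norm_sq_def by (subst suminf_finite[of "{..<2^n}"]) (use f_sq_zero in \<open>auto simp: f_def\<close>)
    have Rf: "ell2 (rhaly \<alpha> f)" "ell2_norm_sq (rhaly \<alpha> f) \<le> C * 2^n"
      using C[OF \<open>ell2 f\<close>] norm_f by auto
    have sum_f: "(\<Sum>j\<le>k. f j) = 2^n" if "2^n \<le> k" for k
    proof -
      have "{..k} = {..<2^n} \<union> {2^n..k}" using that by auto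
      then have "(\<Sum>j\<le>k. f j) = (\<Sum>j<2^n. f j) + (\<Sum>j\<in>{2^n..k}. f j)"
        by (simp add: sum.union_disjoint ivl_disj_int)
      then show ?thesis by (simp add: f_def)
    qed
    have "2^n * 2^n * block_sum (\<lambda>j. (cmod (\<alpha> j))^2) n = block_sum (\<lambda>j. (cmod (rhaly \<alpha> f j))^2) n"
      unfolding block_sum_def sum_distrib_left
      by (intro sum.cong refl) (simp add: rhaly_def sum_f norm_mult power_mult_distrib norm_power power2_eq_square)
    also have "\<dots> \<le> ell2_norm_sq (rhaly \<alpha> f)"
      using Rf(1) unfolding block_sum_def ell2_norm_sq_def ell2_def by (intro sum_le_suminf) auto
    also have "\<dots> \<le> C * 2^n" by (rule Rf(2))
    finally show ?thesis by (simp add: mult.assoc)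
  qed
  then show ?thesis using that by blast
qed

section \<open>The \<open>L\<^sup>2\<close> distance on the circle\<close>

lemma Cauchy_Schwarz_integral:
  fixes u v :: "'a \<Rightarrow> real"
  assumes [measurable]: "u \<in> borel_measurable M" "v \<in> borel_measurable M"
    and u2: "integrable M (\<lambda>x. (u x)^2)" and v2: "integrable M (\<lambda>x. (v x)^2)"
  shows "integrable M (\<lambda>x. u x * v x)"
    and "(\<integral>x. u x * v x \<partial>M) \<le> sqrt (\<integral>x. (u x)^2 \<partial>M) * sqrt (\<integral>x. (v x)^2 \<partial>M)"
proof -
  have abs_prod_le: "\<bar>u x * v x\<bar> \<le> (u x)^2 + (v x)^2" for x
  proof -
    have "2 * \<bar>u x\<bar> * \<bar>v x\<bar> \<le> (u x)^2 + (v x)^2"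
      using sum_squares_bound[of "\<bar>u x\<bar>" "\<bar>v x\<bar>"] by (simp add: power2_eq_square)
    moreover have "0 \<le> \<bar>u x\<bar> * \<bar>v x\<bar>" by simp
    ultimately show ?thesis unfolding abs_mult by linarith
  qed
  show uv: "integrable M (\<lambda>x. u x * v x)"
    by (rule Bochner_Integration.integrable_bound[OF Bochner_Integration.integrable_add[OF u2 v2]]) (auto intro: abs_prod_le)
  have abs_uv: "integrable M (\<lambda>x. \<bar>u x\<bar> * \<bar>v x\<bar>)"
    using integrable_abs[OF uv] by (simp add: abs_mult)
  define X where "X = (\<integral>x. \<bar>u x\<bar> * \<bar>v x\<bar> \<partial>M)"
  have nn_sq: "(\<integral>\<^sup>+x. ennreal \<bar>w x\<bar> ^ 2 \<partial>M) = ennreal (\<integral>x. (w x)^2 \<partial>M)"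
    if "integrable M (\<lambda>x. (w x)^2)" for w :: "'a \<Rightarrow> real"
    using nn_integral_eq_integral[OF that] by (simp add: ennreal_power)
  have "ennreal X = (\<integral>\<^sup>+x. ennreal \<bar>u x\<bar> * ennreal \<bar>v x\<bar> \<partial>M)"
    unfolding X_def by (subst nn_integral_eq_integral[OF abs_uv, symmetric]) (auto simp: ennreal_mult)
  then have "ennreal X ^ 2 \<le> ennreal (\<integral>x. (u x)^2 \<partial>M) * ennreal (\<integral>x. (v x)^2 \<partial>M)"
    using Cauchy_Schwarz_nn_integral[of "\<lambda>x. ennreal \<bar>u x\<bar>" M "\<lambda>x. ennreal \<bar>v x\<bar>"]
    by (simp add: nn_sq[OF u2] nn_sq[OF v2])
  then have "X^2 \<le> (\<integral>x. (u x)^2 \<partial>M) * (\<integral>x. (v x)^2 \<partial>M)"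
    using integral_nonneg_AE[of "\<lambda>x. (u x)^2" M] integral_nonneg_AE[of "\<lambda>x. (v x)^2" M]
      integral_nonneg_AE[of "\<lambda>x. \<bar>u x\<bar> * \<bar>v x\<bar>" M]
    by (simp add: X_def ennreal_power ennreal_mult'[symmetric] ennreal_le_iff)
  then have "X \<le> sqrt (\<integral>x. (u x)^2 \<partial>M) * sqrt (\<integral>x. (v x)^2 \<partial>M)"
    by (simp add: real_le_rsqrt real_sqrt_mult[symmetric])
  moreover have "(\<integral>x. u x * v x \<partial>M) \<le> X"
    unfolding X_def using uv abs_uv by (intro integral_mono) (auto simp: abs_mult[symmetric])
  ultimately show "(\<integral>x. u x * v x \<partial>M) \<le> sqrt (\<integral>x. (u x)^2 \<partial>M) * sqrt (\<integral>x. (v x)^2 \<partial>M)"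
    by linarith
qed

lemma Minkowski_integral:
  fixes u v :: "'a \<Rightarrow> real"
  assumes [measurable]: "u \<in> borel_measurable M" "v \<in> borel_measurable M"
    and u2: "integrable M (\<lambda>x. (u x)^2)" and v2: "integrable M (\<lambda>x. (v x)^2)"
  shows "integrable M (\<lambda>x. (u x + v x)^2)"
    and "sqrt (\<integral>x. (u x + v x)^2 \<partial>M) \<le> sqrt (\<integral>x. (u x)^2 \<partial>M) + sqrt (\<integral>x. (v x)^2 \<partial>M)"
proof -
  note uv = Cauchy_Schwarz_integral[OF assms]
  have expand: "(\<lambda>x. (u x + v x)^2) = (\<lambda>x. (u x)^2 + (v x)^2 + 2 * (u x * v x))"
    by (simp add: fun_eq_iff power2_eq_square algebra_simps)
  show "integrable M (\<lambda>x. (u x + v x)^2)"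
    unfolding expand using u2 v2 uv(1) by auto
  have "(\<integral>x. (u x + v x)^2 \<partial>M)
      = (\<integral>x. (u x)^2 \<partial>M) + (\<integral>x. (v x)^2 \<partial>M) + 2 * (\<integral>x. u x * v x \<partial>M)"
    unfolding expand using u2 v2 uv(1) by simp
  also have "\<dots> \<le> (sqrt (\<integral>x. (u x)^2 \<partial>M) + sqrt (\<integral>x. (v x)^2 \<partial>M))^2"
    using uv(2) by (simp add: power2_eq_square algebra_simps)
  finally have "sqrt (\<integral>x. (u x + v x)^2 \<partial>M) \<le> sqrt ((sqrt (\<integral>x. (u x)^2 \<partial>M) + sqrt (\<integral>x. (v x)^2 \<partial>M))^2)"
    by (rule real_sqrt_le_mono)
  then show "sqrt (\<integral>x. (u x + v x)^2 \<partial>M) \<le> sqrt (\<integral>x. (u x)^2 \<partial>M) + sqrt (\<integral>x. (v x)^2 \<partial>M)"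
    by simp
qed

lemma set_integrable_cmod_sq_iff:
  "set_integrable M S (\<lambda>x. (cmod (w x))^2) \<longleftrightarrow> integrable M (\<lambda>x. (indicator S x * cmod (w x))^2)"
  unfolding set_integrable_def by (intro Bochner_Integration.integrable_cong) (auto split: split_indicator)

lemma set_integral_cmod_sq_eq:
  "(LINT x:S|M. (cmod (w x))^2) = (\<integral>x. (indicator S x * cmod (w x))^2 \<partial>M)"
  unfolding set_lebesgue_integral_def by (intro Bochner_Integration.integral_cong) (auto split: split_indicator)

lemma L2_dist_circle_eq:
  "L2_dist_circle f g = sqrt (\<integral>x. (indicator {-pi..pi} x * cmod (f x - g x))^2 \<partial>lborel) / sqrt (2 * pi)"
  unfolding L2_dist_circle_def set_integral_cmod_sq_eq by (simp add: real_sqrt_divide)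

lemma L2_dist_circle_commute: "L2_dist_circle f g = L2_dist_circle g f"
  unfolding L2_dist_circle_def by (simp add: norm_minus_commute)

lemma L2_dist_circle_nonneg: "0 \<le> L2_dist_circle f g"
  unfolding L2_dist_circle_def set_integral_cmod_sq_eq by (simp add: integral_nonneg_AE)

lemma set_integral_cmod_diff_sq:
  "(LINT x:{-pi..pi}|lborel. (cmod (f x - g x))^2) = 2 * pi * (L2_dist_circle f g)^2"
  unfolding L2_dist_circle_def set_integral_cmod_sq_eq by (simp add: integral_nonneg_AE)

lemma L2_circle_diff:
  assumes f: "L2_circle f" and g: "L2_circle g"
  shows "L2_circle (\<lambda>x. f x - g x)"
proof -
  let ?I = "indicator {-pi..pi} :: real \<Rightarrow> real"
  have [measurable]: "f \<in> borel_measurable borel" "g \<in> borel_measurable borel"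
    using f g unfolding L2_circle_def by auto
  have "integrable lborel (\<lambda>x. (?I x * cmod (f x) + ?I x * cmod (g x))^2)"
    using f g unfolding L2_circle_def set_integrable_cmod_sq_iff by (intro Minkowski_integral) auto
  then have "integrable lborel (\<lambda>x. (?I x * cmod (f x - g x))^2)"
  proof (rule Bochner_Integration.integrable_bound)
    show "AE x in lborel. norm ((?I x * cmod (f x - g x))^2) \<le> norm ((?I x * cmod (f x) + ?I x * cmod (g x))^2)"
      using norm_triangle_ineq4[of "f _" "g _"]
      by (intro AE_I2) (auto simp: indicator_def intro!: power_mono)
  qed measurable
  then show ?thesis
    using f g unfolding L2_circle_def set_integrable_cmod_sq_iff by auto
qed

lemma L2_dist_circle_triangle:
  assumes f: "L2_circle f" and g: "L2_circle g" and h: "L2_circle h"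
  shows "L2_dist_circle f h \<le> L2_dist_circle f g + L2_dist_circle g h"
proof -
  let ?I = "indicator {-pi..pi} :: real \<Rightarrow> real"
  define u where "u x = ?I x * cmod (f x - g x)" for x
  define v where "v x = ?I x * cmod (g x - h x)" for x
  have integrable_sq: "integrable lborel (\<lambda>x. (?I x * cmod (a x - b x))^2)"
    if "L2_circle a" "L2_circle b" for a b
    using L2_circle_diff[OF that] unfolding L2_circle_def set_integrable_cmod_sq_iff by simp
  have [measurable]: "u \<in> borel_measurable lborel" "v \<in> borel_measurable lborel"
    using f g h unfolding u_def v_def L2_circle_def by auto
  have "integrable lborel (\<lambda>x. (u x)^2)" "integrable lborel (\<lambda>x. (v x)^2)"
    unfolding u_def v_def using integrable_sq f g h by auto
  note uv = Minkowski_integral[OF \<open>u \<in> _\<close> \<open>v \<in> _\<close> this]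
  have "(\<integral>x. (?I x * cmod (f x - h x))^2 \<partial>lborel) \<le> (\<integral>x. (u x + v x)^2 \<partial>lborel)"
  proof (rule integral_mono[OF integrable_sq[OF f h] uv(1)])
    fix x
    have "cmod (f x - h x) \<le> cmod (f x - g x) + cmod (g x - h x)"
      using norm_triangle_ineq[of "f x - g x" "g x - h x"] by simp
    then show "(?I x * cmod (f x - h x))^2 \<le> (u x + v x)^2"
      by (auto simp: u_def v_def indicator_def intro!: power_mono)
  qed
  then have "sqrt (\<integral>x. (?I x * cmod (f x - h x))^2 \<partial>lborel) \<le> sqrt (\<integral>x. (u x)^2 \<partial>lborel) + sqrt (\<integral>x. (v x)^2 \<partial>lborel)"
    using uv(2) real_sqrt_le_mono by (blast intro: order_trans)
  then show ?thesis
    unfolding L2_dist_circle_eq u_def v_def by (simp add: add_divide_distrib[symmetric] divide_right_mono)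
qed

lemma nn_integral_translate:
  fixes F :: "real \<Rightarrow> ennreal"
  assumes "F \<in> borel_measurable borel"
  shows "(\<integral>\<^sup>+x. F (x + c) \<partial>lborel) = (\<integral>\<^sup>+x. F x \<partial>lborel)"
  using nn_integral_real_affine[OF assms, of 1 c] by (simp add: add.commute)

lemma nn_integral_periodic_shift_interval:
  fixes F :: "real \<Rightarrow> ennreal"
  assumes [measurable]: "F \<in> borel_measurable borel" and per: "\<And>x. F (x + p) = F x"
  shows "(\<integral>\<^sup>+x. F x * indicator {a..<b} x \<partial>lborel) = (\<integral>\<^sup>+x. F x * indicator {a+p..<b+p} x \<partial>lborel)"
proof -
  have "(\<integral>\<^sup>+x. F x * indicator {a+p..<b+p} x \<partial>lborel) = (\<integral>\<^sup>+x. F (x + p) * indicator {a+p..<b+p} (x + p) \<partial>lborel)"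
    by (rule nn_integral_translate[symmetric]) measurable
  also have "\<dots> = (\<integral>\<^sup>+x. F x * indicator {a..<b} x \<partial>lborel)"
    using per by (intro nn_integral_cong) (auto simp: indicator_def)
  finally show ?thesis ..
qed

lemma nn_integral_periodic_period_start:
  fixes F :: "real \<Rightarrow> ennreal"
  assumes [measurable]: "F \<in> borel_measurable borel" and per: "\<And>x. F (x + p) = F x"
    and ab: "a \<le> b" "b \<le> a + p"
  shows "(\<integral>\<^sup>+x. F x * indicator {a..<a+p} x \<partial>lborel) = (\<integral>\<^sup>+x. F x * indicator {b..<b+p} x \<partial>lborel)"
proof -
  have split: "F x * indicator {c..<e} x = F x * indicator {c..<d} x + F x * indicator {d..<e} x"
    if "c \<le> d" "d \<le> e" for c d e x
    using that by (simp add: distrib_left[symmetric] indicator_add ivl_disj_un_two(3) ivl_disj_int_two(3))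
  have "(\<integral>\<^sup>+x. F x * indicator {a..<a+p} x \<partial>lborel)
      = (\<integral>\<^sup>+x. F x * indicator {a..<b} x \<partial>lborel) + (\<integral>\<^sup>+x. F x * indicator {b..<a+p} x \<partial>lborel)"
    using ab by (simp add: split[of a b "a+p"] nn_integral_add)
  also have "\<dots> = (\<integral>\<^sup>+x. F x * indicator {a+p..<b+p} x \<partial>lborel) + (\<integral>\<^sup>+x. F x * indicator {b..<a+p} x \<partial>lborel)"
    using nn_integral_periodic_shift_interval[of F p a b, OF _ per] by simp
  also have "\<dots> = (\<integral>\<^sup>+x. F x * indicator {b..<b+p} x \<partial>lborel)"
    using ab by (simp add: split[of b "a+p" "b+p"] nn_integral_add add.commute)
  finally show ?thesis .
qed

lemma nn_integral_periodic_translate: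
  fixes F :: "real \<Rightarrow> ennreal"
  assumes [measurable]: "F \<in> borel_measurable borel" and per: "\<And>x. F (x + p) = F x"
    and t: "\<bar>t\<bar> \<le> p"
  shows "(\<integral>\<^sup>+x. F (x - t) * indicator {a..a+p} x \<partial>lborel) = (\<integral>\<^sup>+x. F x * indicator {a..a+p} x \<partial>lborel)"
proof -
  have closed_eq_half_open: "AE x in lborel. H x * indicator {a..a+p} x = H x * indicator {a..<a+p} x"
    for H :: "real \<Rightarrow> ennreal"
    using AE_lborel_singleton[of "a+p"] by eventually_elim (auto simp: indicator_def)
  have "(\<integral>\<^sup>+x. F (x - t) * indicator {a..a+p} x \<partial>lborel) = (\<integral>\<^sup>+x. F (x - t) * indicator {a..<a+p} x \<partial>lborel)"
    by (rule nn_integral_cong_AE[OF closed_eq_half_open])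
  also have "\<dots> = (\<integral>\<^sup>+x. F (x - t) * indicator {(a-t)+t..<(a-t)+p+t} (x - t + t) \<partial>lborel)"
    by simp
  also have "\<dots> = (\<integral>\<^sup>+x. F x * indicator {a-t..<(a-t)+p} x \<partial>lborel)"
    using nn_integral_translate[of "\<lambda>y. F y * indicator {a-t..<(a-t)+p} y" "-t"]
    by (simp add: indicator_def)
  also have "\<dots> = (\<integral>\<^sup>+x. F x * indicator {a..<a+p} x \<partial>lborel)"
  proof (cases "0 \<le> t")
    case True
    then show ?thesis using t by (intro nn_integral_periodic_period_start[of F p, OF _ per]) auto
  next
    case False
    then show ?thesis using t by (intro nn_integral_periodic_period_start[of F p, OF _ per, symmetric]) auto
  qed
  also have "\<dots> = (\<integral>\<^sup>+x. F x * indicator {a..a+p} x \<partial>lborel)"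
    by (rule nn_integral_cong_AE[OF closed_eq_half_open, symmetric])
  finally show ?thesis .
qed

lemma set_integral_cmod_sq_translate:
  assumes f: "L2_circle f" and t: "\<bar>t\<bar> \<le> 2 * pi"
  shows "set_integrable lborel {-pi..pi} (\<lambda>x. (cmod (f (x - t)))^2)"
    and "(LINT x:{-pi..pi}|lborel. (cmod (f (x - t)))^2) = (LINT x:{-pi..pi}|lborel. (cmod (f x))^2)"
proof -
  have [measurable]: "f \<in> borel_measurable borel"
    and f_int: "integrable lborel (\<lambda>x. indicator {-pi..pi} x * (cmod (f x))^2)"
    using f unfolding L2_circle_def set_integrable_def by auto
  define F where "F x = ennreal ((cmod (f x))^2)" for x
  have [measurable]: "F \<in> borel_measurable borel" unfolding F_def by measurable
  have F_per: "F (x + 2 * pi) = F x" for x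
    using f unfolding L2_circle_def F_def by simp
  have "(\<integral>\<^sup>+x. ennreal (indicator {-pi..pi} x * (cmod (f (x - t)))^2) \<partial>lborel)
      = (\<integral>\<^sup>+x. F (x - t) * indicator {-pi..-pi + 2 * pi} x \<partial>lborel)"
    by (intro nn_integral_cong) (auto simp: F_def indicator_def)
  also have "\<dots> = (\<integral>\<^sup>+x. F x * indicator {-pi..-pi + 2 * pi} x \<partial>lborel)"
    using t by (intro nn_integral_periodic_translate F_per) auto
  also have "\<dots> = (\<integral>\<^sup>+x. ennreal (indicator {-pi..pi} x * (cmod (f x))^2) \<partial>lborel)"
    by (intro nn_integral_cong) (auto simp: F_def indicator_def)
  also have "\<dots> = ennreal (LINT x:{-pi..pi}|lborel. (cmod (f x))^2)"
    unfolding set_lebesgue_integral_def by (simp add: nn_integral_eq_integral[OF f_int])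
  finally have nn_eq: "(\<integral>\<^sup>+x. ennreal (indicator {-pi..pi} x * (cmod (f (x - t)))^2) \<partial>lborel)
      = ennreal (LINT x:{-pi..pi}|lborel. (cmod (f x))^2)" .
  have shifted_int: "integrable lborel (\<lambda>x. indicator {-pi..pi} x * (cmod (f (x - t)))^2)"
    by (rule integrableI_nn_integral_finite[OF _ _ nn_eq]) auto
  then show "set_integrable lborel {-pi..pi} (\<lambda>x. (cmod (f (x - t)))^2)"
    by (simp add: set_integrable_def)
  have "ennreal (LINT x:{-pi..pi}|lborel. (cmod (f (x - t)))^2) = ennreal (LINT x:{-pi..pi}|lborel. (cmod (f x))^2)"
    using nn_integral_eq_integral[OF shifted_int] nn_eq by (simp add: set_lebesgue_integral_def)
  then show "(LINT x:{-pi..pi}|lborel. (cmod (f (x - t)))^2) = (LINT x:{-pi..pi}|lborel. (cmod (f x))^2)"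
    by (simp add: set_integral_cmod_sq_eq)
qed

lemma L2_circle_translate:
  assumes "L2_circle f" "\<bar>t\<bar> \<le> 2 * pi"
  shows "L2_circle (\<lambda>x. f (x - t))"
proof -
  have [measurable]: "f \<in> borel_measurable borel" using assms(1) by (simp add: L2_circle_def)
  have "f (x - t + 2 * pi) = f (x - t)" for x
    using assms(1) unfolding L2_circle_def by blast
  then have "(\<lambda>x. f (x - t)) (x + 2 * pi) = f (x - t)" for x
    by (simp add: algebra_simps)
  moreover have "(\<lambda>x. f (x - t)) \<in> borel_measurable borel" by measurable
  ultimately show ?thesis
    using set_integral_cmod_sq_translate(1)[OF assms] unfolding L2_circle_def by blast
qed

lemma L2_dist_circle_translate:
  assumes "L2_circle f" "L2_circle g" "\<bar>t\<bar> \<le> 2 * pi"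
  shows "L2_dist_circle (\<lambda>x. f (x - t)) (\<lambda>x. g (x - t)) = L2_dist_circle f g"
  using set_integral_cmod_sq_translate(2)[OF L2_circle_diff[OF assms(1,2)] assms(3)]
  unfolding L2_dist_circle_def by simp

lemma L2_dist_circle_shift_le:
  assumes f: "L2_circle f" and g: "L2_circle g" and t: "\<bar>t\<bar> \<le> 2 * pi"
  shows "L2_dist_circle (\<lambda>x. f (x - t)) f \<le> L2_dist_circle (\<lambda>x. g (x - t)) g + 2 * L2_dist_circle f g"
proof -
  have ft: "L2_circle (\<lambda>x. f (x - t))" and gt: "L2_circle (\<lambda>x. g (x - t))"
    using L2_circle_translate f g t by auto
  have "L2_dist_circle (\<lambda>x. f (x - t)) f
      \<le> L2_dist_circle (\<lambda>x. f (x - t)) (\<lambda>x. g (x - t)) + L2_dist_circle (\<lambda>x. g (x - t)) f"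
    by (rule L2_dist_circle_triangle[OF ft gt f])
  also have "L2_dist_circle (\<lambda>x. g (x - t)) f \<le> L2_dist_circle (\<lambda>x. g (x - t)) g + L2_dist_circle g f"
    by (rule L2_dist_circle_triangle[OF gt g f])
  finally show ?thesis
    using L2_dist_circle_translate[OF f g t] L2_dist_circle_commute[of g f] by simp
qed

section \<open>Trigonometric polynomials\<close>

definition trig_poly :: "(nat \<Rightarrow> complex) \<Rightarrow> nat \<Rightarrow> real \<Rightarrow> complex" where
  "trig_poly c N \<theta> = (\<Sum>n<N. c n * exp (\<i> * of_nat n * of_real \<theta>))"

lemma boundary_function_iff:
  "boundary_function \<alpha> g \<longleftrightarrow> L2_circle g \<and> (\<lambda>N. L2_dist_circle (trig_poly \<alpha> N) g) \<longlonglongrightarrow> 0"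
  unfolding boundary_function_def trig_poly_def[abs_def] ..

lemma has_integral_exp_int:
  fixes k :: int
  shows "((\<lambda>\<theta>. exp (\<i> * of_int k * of_real \<theta>)) has_integral (if k = 0 then 2 * pi else 0)) {-pi..pi}"
proof (cases "k = 0")
  case True
  then show ?thesis using has_integral_const_real[of "1::complex" "-pi" pi] by (simp add: scaleR_conv_of_real)
next
  case False
  define F where "F z = exp (\<i> * of_int k * z) / (\<i> * of_int k)" for z
  have "((\<lambda>\<theta>. F (of_real \<theta>)) has_vector_derivative exp (\<i> * of_int k * of_real \<theta>)) (at \<theta> within {-pi..pi})" for \<theta>
    by (rule has_vector_derivative_real_field) (use False in \<open>auto simp: F_def intro!: derivative_eq_intros\<close>)
  then have "((\<lambda>\<theta>. exp (\<i> * of_int k * of_real \<theta>)) has_integral (F (of_real pi) - F (of_real (-pi)))) {-pi..pi}"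
    by (intro fundamental_theorem_of_calculus) auto
  moreover have "F (of_real pi) = F (of_real (-pi))"
  proof -
    have "exp (\<i> * of_int k * of_real pi) = cis (of_int k * pi)"
      and "exp (\<i> * of_int k * of_real (-pi)) = cis (- (of_int k * pi))"
      by (simp_all add: cis_conv_exp mult_ac)
    moreover have "sin (of_int k * pi) = 0"
      using sin_npi_int[of k] by (simp add: mult.commute)
    ultimately have "exp (\<i> * of_int k * of_real pi) = exp (\<i> * of_int k * of_real (-pi))"
      by (simp add: complex_eq_iff)
    then show ?thesis by (simp add: F_def)
  qed
  ultimately show ?thesis using False by simp
qed

lemma has_integral_cmod_trig_poly_sq:
  "((\<lambda>\<theta>. (cmod (trig_poly c N \<theta>))^2) has_integral (2 * pi * (\<Sum>n<N. (cmod (c n))^2))) {-pi..pi}"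
proof -
  have expand: "complex_of_real ((cmod (trig_poly c N \<theta>))^2) =
      (\<Sum>m<N. \<Sum>n<N. (c m * cnj (c n)) * exp (\<i> * of_int (int m - int n) * of_real \<theta>))" for \<theta>
  proof -
    have "complex_of_real ((cmod (trig_poly c N \<theta>))^2) = trig_poly c N \<theta> * cnj (trig_poly c N \<theta>)"
      by (rule complex_norm_square)
    also have "\<dots> = (\<Sum>m<N. \<Sum>n<N. (c m * exp (\<i> * of_nat m * of_real \<theta>)) * (cnj (c n) * exp (- (\<i> * of_nat n * of_real \<theta>))))"
      by (simp add: trig_poly_def sum_product exp_cnj)
    also have "\<dots> = (\<Sum>m<N. \<Sum>n<N. (c m * cnj (c n)) * exp (\<i> * of_int (int m - int n) * of_real \<theta>))"
      by (intro sum.cong refl) (simp add: algebra_simps exp_diff exp_minus field_simps)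
    finally show ?thesis .
  qed
  have "((\<lambda>\<theta>. \<Sum>m<N. \<Sum>n<N. (c m * cnj (c n)) * exp (\<i> * of_int (int m - int n) * of_real \<theta>)) has_integral
      (\<Sum>m<N. \<Sum>n<N. (c m * cnj (c n)) * (if int m - int n = 0 then 2 * pi else 0))) {-pi..pi}"
    by (intro has_integral_sum finite_lessThan has_integral_mult_right has_integral_exp_int)
  also have "(\<Sum>m<N. \<Sum>n<N. (c m * cnj (c n)) * (if int m - int n = 0 then 2 * pi else 0))
      = complex_of_real (2 * pi * (\<Sum>n<N. (cmod (c n))^2))"
  proof -
    have "(\<Sum>m<N. \<Sum>n<N. (c m * cnj (c n)) * (if int m - int n = 0 then 2 * pi else 0))
        = (\<Sum>m<N. (c m * cnj (c m)) * 2 * pi)"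
      by (intro sum.cong refl) (simp add: if_distrib sum.delta cong: if_cong)
    also have "\<dots> = complex_of_real (2 * pi * (\<Sum>n<N. (cmod (c n))^2))"
      by (simp only: of_real_mult of_real_sum complex_norm_square) (simp add: sum_distrib_left mult_ac)
    finally show ?thesis .
  qed
  finally have "((\<lambda>\<theta>. complex_of_real ((cmod (trig_poly c N \<theta>))^2)) has_integral
      complex_of_real (2 * pi * (\<Sum>n<N. (cmod (c n))^2))) {-pi..pi}"
    by (simp only: expand)
  from has_integral_linear[OF this bounded_linear_Re] show ?thesis by (simp add: o_def)
qed

lemma continuous_on_trig_poly: "continuous_on UNIV (trig_poly c N)"
  unfolding trig_poly_def by (intro continuous_intros)

lemma borel_measurable_trig_poly [measurable]: "trig_poly c N \<in> borel_measurable borel"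
  by (rule borel_measurable_continuous_onI[OF continuous_on_trig_poly])

lemma trig_poly_periodic: "trig_poly c N (\<theta> + 2 * pi) = trig_poly c N \<theta>"
proof -
  have "exp (\<i> * of_nat n * of_real (\<theta> + 2 * pi)) = exp (\<i> * of_nat n * of_real \<theta>) * exp (2 * of_real pi * \<i>) ^ n" for n
  proof -
    have "exp (\<i> * of_nat n * of_real (\<theta> + 2 * pi)) = exp (\<i> * of_nat n * of_real \<theta> + of_nat n * (2 * of_real pi * \<i>))"
      by (simp add: algebra_simps)
    then show ?thesis by (simp only: exp_add exp_of_nat_mult)
  qed
  then show ?thesis by (simp add: trig_poly_def)
qed

lemma L2_circle_trig_poly: "L2_circle (trig_poly c N)"
proof -
  have "continuous_on {-pi..pi} (\<lambda>\<theta>. (cmod (trig_poly c N \<theta>))^2)"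
    using continuous_on_trig_poly by (intro continuous_intros) (auto intro: continuous_on_subset)
  then show ?thesis
    unfolding L2_circle_def
    using borel_measurable_continuous_onI[OF continuous_on_trig_poly] trig_poly_periodic
    by (auto intro: borel_integrable_atLeastAtMost')
qed

lemma set_integral_cmod_trig_poly_sq:
  "(LINT \<theta>:{-pi..pi}|lborel. (cmod (trig_poly c N \<theta>))^2) = 2 * pi * (\<Sum>n<N. (cmod (c n))^2)"
proof -
  have "set_integrable lborel {-pi..pi} (\<lambda>\<theta>. (cmod (trig_poly c N \<theta>))^2)"
    using L2_circle_trig_poly unfolding L2_circle_def by blast
  then show ?thesis
    using set_borel_integral_eq_integral(2) integral_unique[OF has_integral_cmod_trig_poly_sq] by metis
qed

lemma trig_poly_diff: "trig_poly c N \<theta> - trig_poly d N \<theta> = trig_poly (\<lambda>n. c n - d n) N \<theta>"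
  by (simp add: trig_poly_def sum_subtractf[symmetric] algebra_simps)

lemma L2_dist_trig_poly_sq:
  "(L2_dist_circle (trig_poly c N) (trig_poly d N))^2 = (\<Sum>n<N. (cmod (c n - d n))^2)"
  unfolding L2_dist_circle_def trig_poly_diff set_integral_cmod_trig_poly_sq
  by (simp add: sum_nonneg)

lemma trig_poly_translate:
  "trig_poly c N (\<theta> - t) = trig_poly (\<lambda>n. c n * exp (- \<i> * of_real (real n * t))) N \<theta>"
  unfolding trig_poly_def
  by (intro sum.cong refl) (simp add: exp_add[symmetric] algebra_simps)

lemma trig_poly_truncate:
  "M \<le> N \<Longrightarrow> trig_poly c M = trig_poly (\<lambda>n. if n < M then c n else 0) N"
  unfolding trig_poly_def fun_eq_iff
  by (auto intro!: sum.mono_neutral_cong_left split: if_splits)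

lemma cmod_exp_i_minus_1_sq: "(cmod (exp (\<i> * of_real x) - 1))^2 = 2 - 2 * cos x"
proof -
  have "(cmod (exp (\<i> * of_real x) - 1))^2 = 4 * (sin (x/2))^2"
    by (simp add: dist_exp_i_1 power_mult_distrib)
  moreover have "cos x = 1 - 2 * (sin (x/2))^2"
    using cos_double_sin[of "x/2"] by simp
  ultimately show ?thesis by simp
qed

lemma L2_dist_trig_poly_translate_sq:
  "(L2_dist_circle (\<lambda>\<theta>. trig_poly c N (\<theta> - t)) (trig_poly c N))^2
    = (\<Sum>n<N. (cmod (c n))^2 * (2 - 2 * cos (real n * t)))"
proof -
  have "(cmod (c n * exp (- \<i> * of_real (real n * t)) - c n))^2 = (cmod (c n))^2 * (2 - 2 * cos (real n * t))" for n
  proof -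
    have "c n * exp (- \<i> * of_real (real n * t)) - c n = c n * (exp (\<i> * of_real (- (real n * t))) - 1)"
      by (simp add: algebra_simps)
    then show ?thesis
      using cmod_exp_i_minus_1_sq[of "- (real n * t)"] by (simp add: norm_mult power_mult_distrib)
  qed
  then show ?thesis
    unfolding trig_poly_translate L2_dist_trig_poly_sq by simp
qed

lemma L2_dist_trig_poly_partial_sq:
  assumes "M \<le> N"
  shows "(L2_dist_circle (trig_poly c N) (trig_poly c M))^2 = (\<Sum>n\<in>{M..<N}. (cmod (c n))^2)"
  unfolding trig_poly_truncate[OF assms] L2_dist_trig_poly_sq
  using assms by (intro sum.mono_neutral_cong_right) auto

section \<open>From the mean Lipschitz condition to the dyadic bound\<close>

lemma sum_sq_one_minus_cos_le_if_mean_lipschitz: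
  assumes bf: "boundary_function \<alpha> g"
    and C: "L2_dist_circle (\<lambda>\<theta>. g (\<theta> - t)) g \<le> C * sqrt \<bar>t\<bar>" and t: "\<bar>t\<bar> \<le> 2 * pi"
  shows "(\<Sum>n<M. (cmod (\<alpha> n))^2 * (2 - 2 * cos (real n * t))) \<le> C^2 * \<bar>t\<bar>"
proof -
  define A where "A N = (\<Sum>n<N. (cmod (\<alpha> n))^2 * (2 - 2 * cos (real n * t)))" for N
  have g: "L2_circle g" and conv: "(\<lambda>N. L2_dist_circle (trig_poly \<alpha> N) g) \<longlonglongrightarrow> 0"
    using bf unfolding boundary_function_iff by auto
  have A_le: "sqrt (A N) \<le> C * sqrt \<bar>t\<bar> + 2 * L2_dist_circle (trig_poly \<alpha> N) g" for N
  proof -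
    have "sqrt (A N) = L2_dist_circle (\<lambda>\<theta>. trig_poly \<alpha> N (\<theta> - t)) (trig_poly \<alpha> N)"
      unfolding A_def L2_dist_trig_poly_translate_sq[symmetric] by (simp add: L2_dist_circle_nonneg)
    also have "\<dots> \<le> L2_dist_circle (\<lambda>\<theta>. g (\<theta> - t)) g + 2 * L2_dist_circle (trig_poly \<alpha> N) g"
      by (rule L2_dist_circle_shift_le[OF L2_circle_trig_poly g t])
    finally show ?thesis using C by linarith
  qed
  have "sqrt (A M) \<le> C * sqrt \<bar>t\<bar>"
  proof (rule LIMSEQ_le_const)
    show "(\<lambda>N. C * sqrt \<bar>t\<bar> + 2 * L2_dist_circle (trig_poly \<alpha> N) g) \<longlonglongrightarrow> C * sqrt \<bar>t\<bar>"
      using tendsto_add[OF tendsto_const tendsto_mult_right_zero[OF conv]] by simp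
    have "sqrt (A M) \<le> sqrt (A N)" if "M \<le> N" for N
      using that unfolding A_def by (intro real_sqrt_le_mono sum_mono2) auto
    then show "\<exists>N0. \<forall>N\<ge>N0. sqrt (A M) \<le> C * sqrt \<bar>t\<bar> + 2 * L2_dist_circle (trig_poly \<alpha> N) g"
      using A_le order_trans by blast
  qed
  moreover have "0 \<le> A M" unfolding A_def by (intro sum_nonneg) simp
  ultimately have "(sqrt (A M))^2 \<le> (C * sqrt \<bar>t\<bar>)^2"
    by (intro power_mono) auto
  then show ?thesis using \<open>0 \<le> A M\<close> by (simp add: A_def power_mult_distrib)
qed

lemma cos_nonpos_dyadic_block:
  assumes "j \<in> {2^n..<2^(n+1)}"
  shows "cos (real j * (pi / 2^(n+1))) \<le> 0"
proof -
  have "real (2^n) \<le> real j" "real j \<le> real (2 * 2^n)"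
    using assms by (simp_all only: of_nat_le_iff) auto
  then have "2^n \<le> real j" "real j \<le> 2 * 2^n"
    by simp_all
  then have "pi / 2 \<le> real j * (pi / 2^(n+1))" "real j * (pi / 2^(n+1)) \<le> pi"
    by (auto simp: field_simps)
  then have "cos (real j * (pi / 2^(n+1))) \<le> cos (pi / 2)"
    by (subst cos_mono_le_eq) auto
  then show ?thesis by simp
qed

lemma block_bound_if_mean_lipschitz:
  fixes \<alpha> :: "nat \<Rightarrow> complex"
  assumes bf: "boundary_function \<alpha> g" and ml: "mean_lipschitz_half g"
  obtains B where "\<And>n. 2^n * block_sum (\<lambda>j. (cmod (\<alpha> j))^2) n \<le> B"
proof -
  obtain C where C: "\<And>t. t \<in> {-pi..pi} \<Longrightarrow> L2_dist_circle (\<lambda>\<theta>. g (\<theta> - t)) g \<le> C * sqrt \<bar>t\<bar>"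
    using ml unfolding mean_lipschitz_half_def by blast
  have "2^n * block_sum (\<lambda>j. (cmod (\<alpha> j))^2) n \<le> C^2 * pi / 4" for n
  proof -
    define t :: real where "t = pi / 2^(n+1)"
    have "0 < t" "t \<le> pi"
      using one_le_power[of "2::real" "n+1"] by (auto simp: t_def field_simps)
    then have t: "t \<in> {-pi..pi}" by auto
    have "2 * block_sum (\<lambda>j. (cmod (\<alpha> j))^2) n \<le> block_sum (\<lambda>j. (cmod (\<alpha> j))^2 * (2 - 2 * cos (real j * t))) n"
      unfolding block_sum_def sum_distrib_left
    proof (intro sum_mono)
      fix j :: nat assume "j \<in> {2^n..<2^(n+1)}"
      then have "cos (real j * t) \<le> 0" unfolding t_def by (rule cos_nonpos_dyadic_block)
      then have "(cmod (\<alpha> j))^2 * 2 \<le> (cmod (\<alpha> j))^2 * (2 - 2 * cos (real j * t))"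
        by (intro mult_left_mono) auto
      then show "2 * (cmod (\<alpha> j))^2 \<le> (cmod (\<alpha> j))^2 * (2 - 2 * cos (real j * t))"
        by (simp only: mult.commute)
    qed
    also have "\<dots> \<le> (\<Sum>j<2^(n+1). (cmod (\<alpha> j))^2 * (2 - 2 * cos (real j * t)))"
      unfolding block_sum_def by (intro sum_mono2) auto
    also have "\<dots> \<le> C^2 * \<bar>t\<bar>"
      using t pi_gt_zero by (intro sum_sq_one_minus_cos_le_if_mean_lipschitz[OF bf C]) auto
    finally show ?thesis using \<open>0 < t\<close> by (simp add: t_def field_simps)
  qed
  then show ?thesis using that by blast
qed

section \<open>From the dyadic bound to the mean Lipschitz condition\<close>

lemma two_minus_two_cos_le_sq: "2 - 2 * cos x \<le> (x::real)^2"
proof -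
  have "(sin (x/2))^2 \<le> (x/2)^2"
    using power_mono[OF abs_sin_x_le_abs_x[of "x/2"] abs_ge_zero, of 2] by (simp add: power_divide)
  then show ?thesis
    using cos_double_sin[of "x/2"] by (simp add: power_divide)
qed

lemma sum_power2_mult_sq_le:
  fixes s :: real
  assumes s: "0 \<le> s" and L: "\<And>m. m < L \<Longrightarrow> 2^m * s \<le> 1"
  shows "(\<Sum>m<L. 2^m * s^2) \<le> 2 * s"
proof (cases L)
  case (Suc L')
  have "(\<Sum>m<L. 2^m * s^2) = (2^L - 1) * s^2"
    by (simp add: sum_distrib_right[symmetric] geometric_sum)
  also have "\<dots> \<le> 2^L * s^2"
    by (simp add: mult_right_mono)
  also have "\<dots> = 2 * s * (2^L' * s)"
    using Suc by (simp add: power2_eq_square)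
  also have "\<dots> \<le> 2 * s"
    using L[of L'] Suc s by (simp add: mult_left_le)
  finally show ?thesis .
qed (use s in simp)

lemma sum_half_power_le:
  fixes s :: real
  assumes "1 < 2^L * s"
  shows "(\<Sum>m\<in>{L..<N}. 1 / 2^m) \<le> 2 * s"
proof -
  have "(\<Sum>m\<in>{L..<N}. (1/2::real)^m) \<le> 2 * (1/2)^L"
    using sum_power_atLeastLessThan_le[of "1/2" L N] by simp
  also have "(1/2::real)^L < s"
    using assms by (simp add: power_one_over field_simps)
  finally show ?thesis by (simp add: power_one_over)
qed

lemma sum_min_geometric_le:
  fixes f :: "nat \<Rightarrow> real" and s K :: real
  assumes s: "0 \<le> s" and K: "0 \<le> K"
    and f1: "\<And>m. f m \<le> K * 2^m * s^2" and f2: "\<And>m. f m \<le> K / 2^m"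
  shows "(\<Sum>m<N. f m) \<le> 4 * K * s"
proof (cases "s = 0")
  case True
  then have "(\<Sum>m<N. f m) \<le> 0" using f1 by (intro sum_nonpos) simp
  then show ?thesis using True by simp
next
  case False
  obtain L0 where "1/s < (2::real)^L0" using real_arch_pow[of 2 "1/s"] by auto
  then have ex: "\<exists>L. 1 < 2^L * s" using False s by (auto simp: field_simps)
  \<comment> \<open>the crossover index of the two bounds\<close>
  define L where "L = (LEAST L. 1 < 2^L * s)"
  have L1: "1 < 2^L * s" unfolding L_def by (rule LeastI_ex[OF ex])
  have L2: "2^m * s \<le> 1" if "m < L" for m
    using not_less_Least[OF that[unfolded L_def]] by simp
  have "(\<Sum>m<N. f m) \<le> (\<Sum>m<N. if m < L then K * (2^m * s^2) else K * (1 / 2^m))"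
    using f1 f2 by (intro sum_mono) (auto simp: mult_ac)
  also have "\<dots> = (\<Sum>m\<in>{..<N} \<inter> {m. m < L}. K * (2^m * s^2)) + (\<Sum>m\<in>{..<N} \<inter> - {m. m < L}. K * (1 / 2^m))"
    by (rule sum.If_cases) simp
  also have "\<dots> \<le> K * (\<Sum>m<L. 2^m * s^2) + K * (\<Sum>m\<in>{L..<N}. 1 / 2^m)"
    unfolding sum_distrib_left[symmetric] using K by (intro add_mono mult_left_mono sum_mono2) auto
  also have "\<dots> \<le> K * (2 * s) + K * (2 * s)"
    using K sum_power2_mult_sq_le[OF s L2] sum_half_power_le[OF L1] by (intro add_mono mult_left_mono)
  finally show ?thesis by simp
qed

lemma block_sum_one_minus_cos_le:
  fixes \<alpha> :: "nat \<Rightarrow> complex"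
  shows "block_sum (\<lambda>j. (cmod (\<alpha> j))^2 * (2 - 2 * cos (real j * t))) m
      \<le> 4 * 4^m * t^2 * block_sum (\<lambda>j. (cmod (\<alpha> j))^2) m"
    and "block_sum (\<lambda>j. (cmod (\<alpha> j))^2 * (2 - 2 * cos (real j * t))) m
      \<le> 4 * block_sum (\<lambda>j. (cmod (\<alpha> j))^2) m"
proof -
  have "2 - 2 * cos (real j * t) \<le> 4 * 4^m * t^2" if "j \<in> {2^m..<2^(m+1)}" for j
  proof -
    have "real j \<le> 2 * 2^m"
      using that of_nat_le_iff[of j "2 * 2^m"] by simp
    then have "(real j)^2 \<le> (2 * 2^m)^2"
      by (intro power_mono) auto
    then have "(real j * t)^2 \<le> (2 * 2^m)^2 * t^2"
      unfolding power_mult_distrib[of _ t] by (rule mult_right_mono) simp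
    also have "(2 * 2^m)^2 = (4 * 4^m :: real)"
      using power_mult_distrib[of "2::real" 2 m] by (simp add: power2_eq_square)
    finally show ?thesis
      using two_minus_two_cos_le_sq[of "real j * t"] by linarith
  qed
  then show "block_sum (\<lambda>j. (cmod (\<alpha> j))^2 * (2 - 2 * cos (real j * t))) m
      \<le> 4 * 4^m * t^2 * block_sum (\<lambda>j. (cmod (\<alpha> j))^2) m"
    unfolding block_sum_def sum_distrib_left
    by (intro sum_mono) (simp add: mult_left_mono mult.commute)
  have "(cmod (\<alpha> j))^2 * (2 - 2 * cos (real j * t)) \<le> 4 * (cmod (\<alpha> j))^2" for j
  proof -
    have "2 - 2 * cos (real j * t) \<le> 4"
      using cos_ge_minus_one[of "real j * t"] by linarith
    then show ?thesis
      using mult_left_mono[of _ 4 "(cmod (\<alpha> j))^2"] by (simp only: mult.commute[of _ 4]) simp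
  qed
  then show "block_sum (\<lambda>j. (cmod (\<alpha> j))^2 * (2 - 2 * cos (real j * t))) m
      \<le> 4 * block_sum (\<lambda>j. (cmod (\<alpha> j))^2) m"
    unfolding block_sum_def sum_distrib_left by (intro sum_mono)
qed

lemma sum_sq_one_minus_cos_le_block_bound:
  fixes \<alpha> :: "nat \<Rightarrow> complex"
  assumes B: "\<And>n. 2^n * block_sum (\<lambda>j. (cmod (\<alpha> j))^2) n \<le> B"
  shows "(\<Sum>n<N. (cmod (\<alpha> n))^2 * (2 - 2 * cos (real n * t))) \<le> 16 * B * \<bar>t\<bar>"
proof -
  define w where "w j = (cmod (\<alpha> j))^2 * (2 - 2 * cos (real j * t))" for j
  define b where "b = block_sum (\<lambda>j. (cmod (\<alpha> j))^2)"
  have B0: "0 \<le> B" and b_le: "\<And>m. b m \<le> B / 2^m"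
    using block_sum_bound_nonneg[OF _ B] unfolding b_def by auto
  have block_small: "block_sum w m \<le> 4 * B * 2^m * \<bar>t\<bar>^2" for m
  proof -
    have "block_sum w m \<le> 4 * 4^m * t^2 * b m"
      unfolding w_def b_def by (rule block_sum_one_minus_cos_le(1))
    also have "\<dots> \<le> 4 * 4^m * t^2 * (B / 2^m)" by (intro mult_left_mono b_le) auto
    also have "\<dots> = 4 * B * 2^m * \<bar>t\<bar>^2"
      by (simp add: power_mult_distrib[symmetric] field_simps)
    finally show ?thesis .
  qed
  have block_decay: "block_sum w m \<le> 4 * B / 2^m" for m
    using block_sum_one_minus_cos_le(2)[of \<alpha> t m] b_le[of m] unfolding w_def b_def by simp
  have "(\<Sum>n<N. w n) \<le> (\<Sum>n<2^N. w n)"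
    using less_exp[of N] by (intro sum_mono2) (auto simp: w_def)
  also have "\<dots> = (\<Sum>m<N. block_sum w m)"
    using sum_lessThan_power2_eq_block_sums[of w N] by (simp add: w_def)
  also have "\<dots> \<le> 4 * (4 * B) * \<bar>t\<bar>"
    using B0 block_small block_decay by (intro sum_min_geometric_le) auto
  finally show ?thesis by (simp add: w_def)
qed

lemma mean_lipschitz_if_block_bound:
  fixes \<alpha> :: "nat \<Rightarrow> complex"
  assumes bf: "boundary_function \<alpha> g" and B: "\<And>n. 2^n * block_sum (\<lambda>j. (cmod (\<alpha> j))^2) n \<le> B"
  shows "mean_lipschitz_half g"
proof -
  have g: "L2_circle g" and conv: "(\<lambda>N. L2_dist_circle (trig_poly \<alpha> N) g) \<longlonglongrightarrow> 0"
    using bf unfolding boundary_function_iff by auto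
  have "0 \<le> B" using block_sum_bound_nonneg[OF _ B] by simp
  have "L2_dist_circle (\<lambda>\<theta>. g (\<theta> - t)) g \<le> 4 * sqrt B * sqrt \<bar>t\<bar>" if t: "t \<in> {-pi..pi}" for t
  proof (rule LIMSEQ_le_const)
    show "(\<lambda>N. 4 * sqrt B * sqrt \<bar>t\<bar> + 2 * L2_dist_circle (trig_poly \<alpha> N) g) \<longlonglongrightarrow> 4 * sqrt B * sqrt \<bar>t\<bar>"
      using tendsto_add[OF tendsto_const tendsto_mult_right_zero[OF conv]] by simp
    have "L2_dist_circle (\<lambda>\<theta>. g (\<theta> - t)) g \<le> 4 * sqrt B * sqrt \<bar>t\<bar> + 2 * L2_dist_circle (trig_poly \<alpha> N) g" for N
    proof -
      have "L2_dist_circle (\<lambda>\<theta>. trig_poly \<alpha> N (\<theta> - t)) (trig_poly \<alpha> N)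
          = sqrt (\<Sum>n<N. (cmod (\<alpha> n))^2 * (2 - 2 * cos (real n * t)))"
        unfolding L2_dist_trig_poly_translate_sq[symmetric] by (simp add: L2_dist_circle_nonneg)
      also have "\<dots> \<le> sqrt (16 * B * \<bar>t\<bar>)"
        by (intro real_sqrt_le_mono sum_sq_one_minus_cos_le_block_bound B)
      also have "\<dots> = 4 * sqrt B * sqrt \<bar>t\<bar>"
        by (simp add: real_sqrt_mult)
      moreover have "\<bar>t\<bar> \<le> 2 * pi" using t by auto
      ultimately show ?thesis
        using L2_dist_circle_shift_le[OF g L2_circle_trig_poly, of t \<alpha> N]
          L2_dist_circle_commute[of g "trig_poly \<alpha> N"] by linarith
    qed
    then show "\<exists>N0. \<forall>N\<ge>N0. L2_dist_circle (\<lambda>\<theta>. g (\<theta> - t)) g \<le> 4 * sqrt B * sqrt \<bar>t\<bar> + 2 * L2_dist_circle (trig_poly \<alpha> N) g"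
      by blast
  qed
  with g show ?thesis unfolding mean_lipschitz_half_def by blast
qed

lemma AE_summable_if_summable_integral:
  fixes f :: "nat \<Rightarrow> 'a \<Rightarrow> real"
  assumes [measurable]: "\<And>m. f m \<in> borel_measurable M" and nonneg: "\<And>m x. 0 \<le> f m x"
    and int: "\<And>m. integrable M (f m)" and sum: "summable (\<lambda>m. \<integral>x. f m x \<partial>M)"
  shows "AE x in M. summable (\<lambda>m. f m x)"
proof -
  have "(\<integral>\<^sup>+x. (\<Sum>m. ennreal (f m x)) \<partial>M) = (\<Sum>m. \<integral>\<^sup>+x. ennreal (f m x) \<partial>M)"
    by (rule nn_integral_suminf) auto
  also have "\<dots> = (\<Sum>m. ennreal (\<integral>x. f m x \<partial>M))"
    using nn_integral_eq_integral[OF int] nonneg by simp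
  also have "\<dots> = ennreal (\<Sum>m. \<integral>x. f m x \<partial>M)"
    using sum nonneg by (intro suminf_ennreal2) (auto intro: integral_nonneg_AE)
  finally have "(\<integral>\<^sup>+x. (\<Sum>m. ennreal (f m x)) \<partial>M) \<noteq> \<infinity>" by simp
  then have "AE x in M. (\<Sum>m. ennreal (f m x)) \<noteq> \<infinity>"
    by (intro nn_integral_PInf_AE) auto
  then show ?thesis
    by eventually_elim (use nonneg in \<open>auto intro: summable_suminf_not_top\<close>)
qed

lemma summable_if_summable_geometric_weighted_sq:
  fixes d :: "nat \<Rightarrow> 'a::banach"
  assumes r: "1 < r" and sum: "summable (\<lambda>m. r^m * (norm (d m))^2)"
  shows "summable d"
proof (rule summable_norm_cancel, rule summable_comparison_test')
  show "summable (\<lambda>m. ((1/r)^m + r^m * (norm (d m))^2) / 2)"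
    using r sum by (intro summable_divide summable_add summable_geometric) auto
  fix m
  \<comment> \<open>AM-GM with the weights r^-m and r^m\<close>
  have "0 \<le> (1/r)^m * (r^m * norm (d m) - 1)^2" using r by simp
  then show "norm (norm (d m)) \<le> ((1/r)^m + r^m * (norm (d m))^2) / 2"
    using r by (simp add: power2_eq_square field_simps power_one_over)
qed

lemma convergent_if_summable_diff:
  fixes s :: "nat \<Rightarrow> 'a::banach"
  assumes "summable (\<lambda>m. s (Suc m) - s m)"
  shows "convergent s"
proof -
  have "(\<lambda>m. s 0 + (\<Sum>i<m. s (Suc i) - s i)) \<longlonglongrightarrow> s 0 + (\<Sum>i. s (Suc i) - s i)"
    using assms by (intro tendsto_add tendsto_const summable_LIMSEQ)
  then show ?thesis
    by (auto simp: sum_lessThan_telescope intro: convergentI)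
qed

lemma set_integral_cmod_trig_poly_dyadic_diff:
  "(LINT \<theta>:{-pi..pi}|lborel. (cmod (trig_poly \<alpha> (2^(m+1)) \<theta> - trig_poly \<alpha> (2^m) \<theta>))^2)
    = 2 * pi * block_sum (\<lambda>j. (cmod (\<alpha> j))^2) m"
  unfolding set_integral_cmod_diff_sq
  using L2_dist_trig_poly_partial_sq[of "2^m" "2^(m+1)" \<alpha>] by (simp add: block_sum_def)

lemma AE_convergent_trig_poly_dyadic:
  fixes \<alpha> :: "nat \<Rightarrow> complex"
  assumes B: "\<And>n. 2^n * block_sum (\<lambda>j. (cmod (\<alpha> j))^2) n \<le> B"
  shows "AE \<theta> in lborel. \<theta> \<in> {-pi..pi} \<longrightarrow> convergent (\<lambda>m. trig_poly \<alpha> (2^m) \<theta>)"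
proof -
  define d where "d m \<theta> = trig_poly \<alpha> (2^(m+1)) \<theta> - trig_poly \<alpha> (2^m) \<theta>" for m \<theta>
  \<comment> \<open>any weight in (1, 2) works, since the squared L^2 norm of d m is O(2^-m)\<close>
  define f where "f m \<theta> = (3/2)^m * (indicator {-pi..pi} \<theta> * (cmod (d m \<theta>))^2)" for m \<theta>
  have block_le: "\<And>m. block_sum (\<lambda>j. (cmod (\<alpha> j))^2) m \<le> B / 2^m"
    using block_sum_bound_nonneg[OF _ B] by auto
  have "AE \<theta> in lborel. summable (\<lambda>m. f m \<theta>)"
  proof (rule AE_summable_if_summable_integral)
    show "f m \<in> borel_measurable lborel" for m
      unfolding f_def d_def by measurable
    show "integrable lborel (f m)" for m
      using L2_circle_diff[OF L2_circle_trig_poly L2_circle_trig_poly]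
      unfolding f_def d_def L2_circle_def set_integrable_def by simp
    show "summable (\<lambda>m. \<integral>\<theta>. f m \<theta> \<partial>lborel)"
    proof (rule summable_comparison_test')
      show "summable (\<lambda>m. 2 * pi * B * (3/4::real)^m)"
        by (intro summable_mult summable_geometric) auto
      fix m
      have "(\<integral>\<theta>. f m \<theta> \<partial>lborel) = (3/2)^m * (2 * pi * block_sum (\<lambda>j. (cmod (\<alpha> j))^2) m)"
        using set_integral_cmod_trig_poly_dyadic_diff[of \<alpha> m]
        by (simp add: f_def d_def set_lebesgue_integral_def)
      also have "\<dots> \<le> (3/2)^m * (2 * pi * (B / 2^m))"
        using block_le[of m] by (intro mult_left_mono) auto
      also have "\<dots> = 2 * pi * B * (3/4)^m"
        by (simp add: power_divide field_simps power_mult_distrib[symmetric])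
      finally show "norm (\<integral>\<theta>. f m \<theta> \<partial>lborel) \<le> 2 * pi * B * (3/4)^m"
        by (simp add: f_def integral_nonneg_AE)
    qed
  qed (simp add: f_def)
  then show ?thesis
  proof eventually_elim
    case (elim \<theta>)
    show ?case
    proof
      assume "\<theta> \<in> {-pi..pi}"
      then have "summable (\<lambda>m. (3/2)^m * (norm (d m \<theta>))^2)"
        using elim by (simp add: f_def)
      then have "summable (\<lambda>m. d m \<theta>)"
        by (rule summable_if_summable_geometric_weighted_sq[rotated]) simp
      then show "convergent (\<lambda>m. trig_poly \<alpha> (2^m) \<theta>)"
        by (intro convergent_if_summable_diff) (simp add: d_def)
    qed
  qed
qed

lemma nn_integral_le_if_AE_tendsto:
  fixes F :: "nat \<Rightarrow> 'a \<Rightarrow> ennreal"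
  assumes [measurable]: "\<And>m. F m \<in> borel_measurable M"
    and lim: "AE x in M. (\<lambda>m. F m x) \<longlonglongrightarrow> G x"
    and bound: "\<forall>\<^sub>F m in sequentially. (\<integral>\<^sup>+x. F m x \<partial>M) \<le> K"
  shows "(\<integral>\<^sup>+x. G x \<partial>M) \<le> K"
proof -
  have "(\<integral>\<^sup>+x. G x \<partial>M) = (\<integral>\<^sup>+x. liminf (\<lambda>m. F m x) \<partial>M)"
    using lim by (intro nn_integral_cong_AE) (auto elim!: AE_mp simp: lim_imp_Liminf)
  also have "\<dots> \<le> liminf (\<lambda>m. \<integral>\<^sup>+x. F m x \<partial>M)"
    by (rule nn_integral_liminf) measurable
  also have "\<dots> \<le> liminf (\<lambda>m. K)"
    using bound by (rule Liminf_mono)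
  finally show ?thesis
    by (simp add: Liminf_const)
qed

lemma set_integral_cmod_sq_limit_le:
  fixes f :: "nat \<Rightarrow> 'a \<Rightarrow> complex"
  assumes [measurable]: "\<And>m. f m \<in> borel_measurable M" "g \<in> borel_measurable M" "S \<in> sets M"
    and lim: "AE x in M. x \<in> S \<longrightarrow> (\<lambda>m. f m x) \<longlonglongrightarrow> g x"
    and bound: "\<forall>\<^sub>F m in sequentially.
      set_integrable M S (\<lambda>x. (cmod (f m x))^2) \<and> (LINT x:S|M. (cmod (f m x))^2) \<le> K"
  shows "set_integrable M S (\<lambda>x. (cmod (g x))^2)" and "(LINT x:S|M. (cmod (g x))^2) \<le> K"
proof -
  define G where "G x = ennreal (indicator S x * (cmod (g x))^2)" for x
  obtain m where "(LINT x:S|M. (cmod (f m x))^2) \<le> K"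
    using eventually_happens'[OF sequentially_bot bound] by blast
  moreover have "0 \<le> (LINT x:S|M. (cmod (f m x))^2)"
    unfolding set_lebesgue_integral_def by (simp add: integral_nonneg_AE)
  ultimately have "0 \<le> K" by linarith
  have G_le: "(\<integral>\<^sup>+x. G x \<partial>M) \<le> ennreal K"
    unfolding G_def
  proof (rule nn_integral_le_if_AE_tendsto)
    show "AE x in M. (\<lambda>m. ennreal (indicator S x * (cmod (f m x))^2)) \<longlonglongrightarrow> ennreal (indicator S x * (cmod (g x))^2)"
      using lim by eventually_elim (auto intro!: tendsto_ennrealI tendsto_intros split: split_indicator)
    show "\<forall>\<^sub>F m in sequentially. (\<integral>\<^sup>+x. ennreal (indicator S x * (cmod (f m x))^2) \<partial>M) \<le> ennreal K"
      using bound unfolding set_lebesgue_integral_def set_integrable_def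
      by eventually_elim (simp add: nn_integral_eq_integral ennreal_leI)
  qed measurable
  have G_int: "integrable M (\<lambda>x. indicator S x * (cmod (g x))^2)"
  proof (rule integrableI_bounded)
    have "(\<integral>\<^sup>+x. ennreal (norm (indicator S x * (cmod (g x))^2)) \<partial>M) = (\<integral>\<^sup>+x. G x \<partial>M)"
      unfolding G_def by (intro nn_integral_cong) (simp add: indicator_def)
    with G_le show "(\<integral>\<^sup>+x. ennreal (norm (indicator S x * (cmod (g x))^2)) \<partial>M) < \<infinity>"
      by (simp add: le_less_trans)
  qed measurable
  then show "set_integrable M S (\<lambda>x. (cmod (g x))^2)"
    by (simp add: set_integrable_def)
  have "ennreal (LINT x:S|M. (cmod (g x))^2) = (\<integral>\<^sup>+x. G x \<partial>M)"
    unfolding G_def set_lebesgue_integral_def by (simp add: nn_integral_eq_integral[OF G_int])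
  with G_le \<open>0 \<le> K\<close> show "(LINT x:S|M. (cmod (g x))^2) \<le> K"
    by (simp add: ennreal_le_iff[symmetric])
qed

lemma ell2_tail_bound:
  assumes "ell2 \<alpha>"
  shows "(\<Sum>n\<in>{N..<M}. (cmod (\<alpha> n))^2) \<le> ell2_norm_sq \<alpha> - (\<Sum>n<N. (cmod (\<alpha> n))^2)"
proof -
  have sa: "summable (\<lambda>n. (cmod (\<alpha> n))^2)" using assms by (simp add: ell2_def)
  have "(\<Sum>n<N. (cmod (\<alpha> n))^2) + (\<Sum>n\<in>{N..<M}. (cmod (\<alpha> n))^2) \<le> (\<Sum>n\<in>{..<N} \<union> {N..<M}. (cmod (\<alpha> n))^2)"
    by (subst sum.union_disjoint) auto
  also have "\<dots> \<le> ell2_norm_sq \<alpha>"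
    unfolding ell2_norm_sq_def by (intro sum_le_suminf[OF sa]) auto
  finally show ?thesis by simp
qed

lemma ell2_tail_tendsto_zero:
  assumes "ell2 \<alpha>"
  shows "(\<lambda>N. ell2_norm_sq \<alpha> - (\<Sum>n<N. (cmod (\<alpha> n))^2)) \<longlonglongrightarrow> 0"
  using tendsto_diff[OF tendsto_const summable_LIMSEQ[of "\<lambda>n. (cmod (\<alpha> n))^2"], of "ell2_norm_sq \<alpha>"] assms
  by (simp add: ell2_def ell2_norm_sq_def)

lemma set_integral_cmod_trig_poly_diff_le_tail:
  assumes "ell2 \<alpha>" "N \<le> M"
  shows "(LINT \<theta>:{-pi..pi}|lborel. (cmod (trig_poly \<alpha> N \<theta> - trig_poly \<alpha> M \<theta>))^2)
    \<le> 2 * pi * (ell2_norm_sq \<alpha> - (\<Sum>n<N. (cmod (\<alpha> n))^2))"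
proof -
  have "(LINT \<theta>:{-pi..pi}|lborel. (cmod (trig_poly \<alpha> N \<theta> - trig_poly \<alpha> M \<theta>))^2)
      = 2 * pi * (\<Sum>n\<in>{N..<M}. (cmod (\<alpha> n))^2)"
    using L2_dist_trig_poly_partial_sq[OF assms(2), of \<alpha>]
    by (simp only: set_integral_cmod_diff_sq L2_dist_circle_commute)
  then show ?thesis
    using ell2_tail_bound[OF assms(1), of N M] by simp
qed

lemma set_integral_cmod_trig_poly_limit_le:
  fixes \<alpha> :: "nat \<Rightarrow> complex"
  assumes ell: "ell2 \<alpha>" and [measurable]: "G \<in> borel_measurable borel"
    and lim: "AE \<theta> in lborel. \<theta> \<in> {-pi..pi} \<longrightarrow> (\<lambda>m. trig_poly \<alpha> (2^m) \<theta>) \<longlonglongrightarrow> G \<theta>"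
  shows "set_integrable lborel {-pi..pi} (\<lambda>\<theta>. (cmod (trig_poly \<alpha> N \<theta> - G \<theta>))^2)"
    and "(LINT \<theta>:{-pi..pi}|lborel. (cmod (trig_poly \<alpha> N \<theta> - G \<theta>))^2)
      \<le> 2 * pi * (ell2_norm_sq \<alpha> - (\<Sum>n<N. (cmod (\<alpha> n))^2))"
proof -
  let ?K = "2 * pi * (ell2_norm_sq \<alpha> - (\<Sum>n<N. (cmod (\<alpha> n))^2))"
  have "\<forall>\<^sub>F m in sequentially.
      set_integrable lborel {-pi..pi} (\<lambda>\<theta>. (cmod (trig_poly \<alpha> N \<theta> - trig_poly \<alpha> (2^m) \<theta>))^2)
      \<and> (LINT \<theta>:{-pi..pi}|lborel. (cmod (trig_poly \<alpha> N \<theta> - trig_poly \<alpha> (2^m) \<theta>))^2) \<le> ?K"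
  proof (rule eventually_sequentiallyI[of N], rule conjI)
    fix m assume "N \<le> m"
    then have "N \<le> 2^m" using less_exp[of m] by linarith
    show "set_integrable lborel {-pi..pi} (\<lambda>\<theta>. (cmod (trig_poly \<alpha> N \<theta> - trig_poly \<alpha> (2^m) \<theta>))^2)"
      using L2_circle_diff[OF L2_circle_trig_poly L2_circle_trig_poly] unfolding L2_circle_def by blast
    show "(LINT \<theta>:{-pi..pi}|lborel. (cmod (trig_poly \<alpha> N \<theta> - trig_poly \<alpha> (2^m) \<theta>))^2) \<le> ?K"
      by (rule set_integral_cmod_trig_poly_diff_le_tail[OF ell \<open>N \<le> 2^m\<close>])
  qed
  moreover have "AE \<theta> in lborel. \<theta> \<in> {-pi..pi} \<longrightarrow>
      (\<lambda>m. trig_poly \<alpha> N \<theta> - trig_poly \<alpha> (2^m) \<theta>) \<longlonglongrightarrow> trig_poly \<alpha> N \<theta> - G \<theta>"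
    using lim by eventually_elim (auto intro: tendsto_diff)
  ultimately show "set_integrable lborel {-pi..pi} (\<lambda>\<theta>. (cmod (trig_poly \<alpha> N \<theta> - G \<theta>))^2)"
    and "(LINT \<theta>:{-pi..pi}|lborel. (cmod (trig_poly \<alpha> N \<theta> - G \<theta>))^2) \<le> ?K"
    using set_integral_cmod_sq_limit_le[of "\<lambda>m \<theta>. trig_poly \<alpha> N \<theta> - trig_poly \<alpha> (2^m) \<theta>" lborel
        "\<lambda>\<theta>. trig_poly \<alpha> N \<theta> - G \<theta>" "{-pi..pi}" ?K]
    by simp_all
qed

lemma boundary_function_exists:
  fixes \<alpha> :: "nat \<Rightarrow> complex"
  assumes ell: "ell2 \<alpha>" and B: "\<And>n. 2^n * block_sum (\<lambda>j. (cmod (\<alpha> j))^2) n \<le> B"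
  shows "boundary_function \<alpha> (\<lambda>\<theta>. lim (\<lambda>m. trig_poly \<alpha> (2^m) \<theta>))"
proof -
  define G where "G \<theta> = lim (\<lambda>m. trig_poly \<alpha> (2^m) \<theta>)" for \<theta>
  define T where "T N = ell2_norm_sq \<alpha> - (\<Sum>n<N. (cmod (\<alpha> n))^2)" for N
  have G_meas: "G \<in> borel_measurable borel"
    unfolding G_def by (rule borel_measurable_lim_metric) simp
  have "AE \<theta> in lborel. \<theta> \<in> {-pi..pi} \<longrightarrow> (\<lambda>m. trig_poly \<alpha> (2^m) \<theta>) \<longlonglongrightarrow> G \<theta>"
    using AE_convergent_trig_poly_dyadic[OF B] by eventually_elim (auto simp: G_def convergent_LIMSEQ_iff)
  note close = set_integral_cmod_trig_poly_limit_le[OF ell G_meas this, folded T_def]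
  have "G (\<theta> + 2 * pi) = G \<theta>" for \<theta>
    by (simp add: G_def trig_poly_periodic)
  then have "L2_circle G"
    using close(1)[of 0] G_meas by (simp add: L2_circle_def trig_poly_def)
  moreover have "(\<lambda>N. L2_dist_circle (trig_poly \<alpha> N) G) \<longlonglongrightarrow> 0"
  proof (rule tendsto_sandwich[of "\<lambda>_. 0" _ _ "\<lambda>N. sqrt (T N)"])
    have "(L2_dist_circle (trig_poly \<alpha> N) G)^2 \<le> T N" for N
      using close(2)[of N] by (simp add: set_integral_cmod_diff_sq)
    then show "\<forall>\<^sub>F N in sequentially. L2_dist_circle (trig_poly \<alpha> N) G \<le> sqrt (T N)"
      by (simp add: real_le_rsqrt)
    show "(\<lambda>N. sqrt (T N)) \<longlonglongrightarrow> 0"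
      using tendsto_real_sqrt[OF ell2_tail_tendsto_zero[OF ell]] by (simp add: T_def)
  qed (auto simp: L2_dist_circle_nonneg)
  ultimately show ?thesis
    unfolding boundary_function_iff G_def by simp
qed

theorem theorem1p1:
  fixes \<alpha> :: "nat \<Rightarrow> complex"
  assumes "ell2 \<alpha>"
  shows "(rhaly_bounded \<alpha> \<longleftrightarrow> (\<exists>g. boundary_function \<alpha> g \<and> mean_lipschitz_half g))
       \<and> ((\<exists>g. boundary_function \<alpha> g \<and> mean_lipschitz_half g) \<longleftrightarrow>
          (\<exists>B. \<forall>n::nat. 2 ^ n * (\<Sum>j\<in>{2 ^ n..<2 ^ (n + 1)}. (cmod (\<alpha> j))^2) \<le> (B::real)))"
proof -
  let ?iii = "\<exists>B. \<forall>n. 2^n * block_sum (\<lambda>j. (cmod (\<alpha> j))^2) n \<le> (B::real)"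
  have "rhaly_bounded \<alpha> \<longleftrightarrow> ?iii"
    by (metis block_bound_if_rhaly_bounded rhaly_bounded_if_block_bound)
  moreover have "(\<exists>g. boundary_function \<alpha> g \<and> mean_lipschitz_half g) \<longleftrightarrow> ?iii"
  proof
    assume "\<exists>g. boundary_function \<alpha> g \<and> mean_lipschitz_half g"
    then show ?iii by (metis block_bound_if_mean_lipschitz)
  next
    assume ?iii
    then obtain B where B: "\<And>n. 2^n * block_sum (\<lambda>j. (cmod (\<alpha> j))^2) n \<le> B" by blast
    show "\<exists>g. boundary_function \<alpha> g \<and> mean_lipschitz_half g"
      using boundary_function_exists[OF assms B] mean_lipschitz_if_block_bound[OF _ B] by blast
  qed
  ultimately show ?thesis
    unfolding block_sum_def by simp
qed

end
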